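(* Let $\mathbb{K}$ be a field, $R=\mathbb{K}\langle x,y\rangle/(xy-1)$, and let $I=\langle 1-yx\rangle$ be the socle of $R$. Let $H=\Sigma\oplus Rp(x)$ be a left ideal of $R$, where $p(x)\in\mathbb{K}[x]$ and $\Sigma\subseteq I$ is a left ideal. If $p(x)\neq 0$, then $H$ is finitely generated as a left $R$-module and $\Sigma$ has finite length. In particular, every left ideal of $R$ is either semisimple or finitely generated.
   Context: $R$ has $\mathbb{K}$-basis $\{y^ix^j: i,j\ge 0\}$; $I=\bigoplus_{n\ge1}Rf_n$ with $f_n=y^{n-1}x^{n-1}-y^nx^n$, each $Rf_n$ a simple left module isomorphic to $Rf_1$. *)

theory Defs
  imports "HOL-Library.Poly_Mapping" "HOL-Computational_Algebra.Polynomial"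
begin

text \<open>The Jacobson algebra R = K<x,y>/(xy - 1), modelled by its normal-form basis
  y^i x^j (i,j >= 0): an element is a finitely supported K-valued function on pairs (i,j),
  the pair (i,j) standing for the monomial y^i x^j.\<close>

type_synonym 'k jac = "(nat \<times> nat) \<Rightarrow>\<^sub>0 'k"

text \<open>Product of basis monomials: (y^i x^j)(y^k x^l) = y^(i + (k-j)) x^(l + (j-k))
  (truncated subtraction), which is forced by xy = 1.\<close>
definition jmono :: "nat \<times> nat \<Rightarrow> nat \<times> nat \<Rightarrow> nat \<times> nat" where
  "jmono u v = (fst u + (fst v - snd u), snd v + (snd u - fst v))"

definition jmul :: "'k::field jac \<Rightarrow> 'k jac \<Rightarrow> 'k jac" where
  "jmul a b = (\<Sum>u\<in>Poly_Mapping.keys a. \<Sum>v\<in>Poly_Mapping.keys b.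
      Poly_Mapping.single (jmono u v) (Poly_Mapping.lookup a u * Poly_Mapping.lookup b v))"

definition jone :: "'k::field jac" where "jone = Poly_Mapping.single (0,0) 1"
definition jx :: "'k::field jac" where "jx = Poly_Mapping.single (0,1) 1"
definition jy :: "'k::field jac" where "jy = Poly_Mapping.single (1,0) 1"

definition jpoly :: "'k::field poly \<Rightarrow> 'k jac" where
  "jpoly p = (\<Sum>i\<le>degree p. Poly_Mapping.single (0,i) (coeff p i))"

definition left_ideal :: "'k::field jac set \<Rightarrow> bool" where
  "left_ideal L \<longleftrightarrow> 0 \<in> L \<and> (\<forall>a\<in>L. \<forall>b\<in>L. a + b \<in> L) \<and> (\<forall>r :: 'k jac. \<forall>a\<in>L. jmul r a \<in> L)"

definition two_sided_ideal :: "'k::field jac set \<Rightarrow> bool" where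
  "two_sided_ideal L \<longleftrightarrow> left_ideal L \<and> (\<forall>r :: 'k jac. \<forall>a\<in>L. jmul a r \<in> L)"

definition jI :: "'k::field jac set" where
  "jI = \<Inter>{L. two_sided_ideal L \<and> jone - jmul jy jx \<in> L}"

definition lprinc :: "'k::field jac \<Rightarrow> 'k jac set" where
  "lprinc a = {jmul r a | r :: 'k jac. True}"

definition lspan :: "'k::field jac set \<Rightarrow> 'k jac set" where
  "lspan G = {\<Sum>g\<in>F. jmul (c g) g | (F :: 'k jac set) (c :: 'k jac \<Rightarrow> 'k jac). finite F \<and> F \<subseteq> G}"

definition fin_gen :: "'k::field jac set \<Rightarrow> bool" where
  "fin_gen L \<longleftrightarrow> (\<exists>G :: 'k jac set. finite G \<and> G \<subseteq> L \<and> L = lspan G)"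

definition simple_li :: "'k::field jac set \<Rightarrow> bool" where
  "simple_li S \<longleftrightarrow> left_ideal S \<and> S \<noteq> {0} \<and>
     (\<forall>L :: 'k jac set. left_ideal L \<longrightarrow> L \<subseteq> S \<longrightarrow> L = {0} \<or> L = S)"

definition semisimple_li :: "'k::field jac set \<Rightarrow> bool" where
  "semisimple_li L \<longleftrightarrow> left_ideal L \<and>
     (\<forall>a\<in>L. \<exists>(n::nat) (f :: nat \<Rightarrow> 'k jac) (S :: nat \<Rightarrow> 'k jac set). (\<forall>i<n. simple_li (S i) \<and> S i \<subseteq> L \<and> f i \<in> S i) \<and> a = (\<Sum>i<n. f i))"

definition finite_length :: "'k::field jac set \<Rightarrow> bool" where
  "finite_length L \<longleftrightarrow> (\<exists>(n::nat) (M :: nat \<Rightarrow> 'k jac set). M 0 = {0} \<and> M n = L \<and> (\<forall>i\<le>n. left_ideal (M i)) \<and>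
     (\<forall>i<n. M i \<subset> M (Suc i) \<and>
        (\<forall>N :: 'k jac set. left_ideal N \<longrightarrow> M i \<subseteq> N \<longrightarrow> N \<subseteq> M (Suc i) \<longrightarrow> N = M i \<or> N = M (Suc i))))"

end

theory Submission
  imports Defs
begin

text \<open>
  Map R onto the Laurent polynomial ring K[t,1/t] by x \<mapsto> t, y \<mapsto> 1/t; its kernel J contains I.
  Every z \<in> J is the finite sum of its components e_ii z along the matrix units
  e_ii = y^i (1 - yx) x^i, and each nonzero e_ii z generates a simple left ideal because the corner
  ring (1 - yx) R (1 - yx) is K.  Hence left ideals inside J are semisimple, and a left ideal
  A \<subseteq> A' agrees with A' on J as soon as U(A) = U(A'), where U(A) = {f \<in> K[x] | (1 - yx) f \<in> A}.

  If A contains some a \<notin> J, then g = x^k a is a nonzero polynomial for large k, and A \<subseteq> A' are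
  equal as soon as also V(A) = V(A'), where V(A) is the space of polynomials congruent modulo J to
  an element of A.  Both U(A) and V(A) contain g K[x], so enlarging A enlarges the set of degrees
  of remainders modulo g of U(A) or of V(A); these sets lie in {0, ..., deg g - 1}.  This bounds
  ascending chains of left ideals containing a, so such A is finitely generated.  For \<Sigma> \<subseteq> I with
  \<Sigma> \<inter> R p = 0, the spaces U(N) for N \<subseteq> \<Sigma> meet p K[x] only in 0, and the same count modulo p
  bounds chains of left ideals inside \<Sigma>.
\<close>

abbreviation (input) lookup where "lookup \<equiv> Poly_Mapping.lookup"
abbreviation (input) keys where "keys \<equiv> Poly_Mapping.keys"
abbreviation (input) single where "single \<equiv> Poly_Mapping.single"

section \<open>The ring structure of R\<close>

lemma jmono_assoc: "jmono (jmono u v) w = jmono u (jmono v w)"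
  unfolding jmono_def by (cases u; cases v; cases w) auto

lemma poly_mapping_sum_single:
  "(a::'a \<Rightarrow>\<^sub>0 'b::comm_monoid_add) = (\<Sum>u\<in>keys a. single u (lookup a u))"
proof (rule poly_mapping_eqI)
  fix k
  show "lookup a k = lookup (\<Sum>u\<in>keys a. single u (lookup a u)) k"
    by (cases "k \<in> keys a") (auto simp: lookup_sum lookup_single when_def in_keys_iff sum.delta)
qed

lemma jmul_eq_sum_over:
  assumes "finite A" "keys a \<subseteq> A" "finite B" "keys b \<subseteq> B"
  shows "jmul a b = (\<Sum>u\<in>A. \<Sum>v\<in>B. single (jmono u v) (lookup a u * lookup b v))"
proof -
  have "jmul a b = (\<Sum>u\<in>keys a. \<Sum>v\<in>B. single (jmono u v) (lookup a u * lookup b v))"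
    unfolding jmul_def
    by (rule sum.cong[OF refl], rule sum.mono_neutral_left) (use assms in \<open>auto simp: in_keys_iff\<close>)
  also have "\<dots> = (\<Sum>u\<in>A. \<Sum>v\<in>B. single (jmono u v) (lookup a u * lookup b v))"
    by (rule sum.mono_neutral_left) (use assms in \<open>auto simp: in_keys_iff\<close>)
  finally show ?thesis .
qed

lemma jmul_add_left: "jmul (a + b) c = jmul a c + jmul b c"
proof -
  let ?A = "keys a \<union> keys b"
  have "jmul (a + b) c = (\<Sum>u\<in>?A. \<Sum>v\<in>keys c. single (jmono u v) (lookup (a + b) u * lookup c v))"
    by (rule jmul_eq_sum_over) (use keys_add[of a b] in auto)
  also have "\<dots> = (\<Sum>u\<in>?A. \<Sum>v\<in>keys c. single (jmono u v) (lookup a u * lookup c v))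
      + (\<Sum>u\<in>?A. \<Sum>v\<in>keys c. single (jmono u v) (lookup b u * lookup c v))"
    by (simp add: lookup_add distrib_right single_add sum.distrib)
  also have "\<dots> = jmul a c + jmul b c"
    by (subst (1 2) jmul_eq_sum_over[where A = ?A and B = "keys c"]) auto
  finally show ?thesis .
qed

lemma jmul_add_right: "jmul a (b + c) = jmul a b + jmul a c"
proof -
  let ?B = "keys b \<union> keys c"
  have "jmul a (b + c) = (\<Sum>u\<in>keys a. \<Sum>v\<in>?B. single (jmono u v) (lookup a u * lookup (b + c) v))"
    by (rule jmul_eq_sum_over) (use keys_add[of b c] in auto)
  also have "\<dots> = (\<Sum>u\<in>keys a. \<Sum>v\<in>?B. single (jmono u v) (lookup a u * lookup b v))
      + (\<Sum>u\<in>keys a. \<Sum>v\<in>?B. single (jmono u v) (lookup a u * lookup c v))"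
    by (simp add: lookup_add distrib_left single_add sum.distrib)
  also have "\<dots> = jmul a b + jmul a c"
    by (subst (1 2) jmul_eq_sum_over[where A = "keys a" and B = ?B]) auto
  finally show ?thesis .
qed

lemma jmul_zero_left [simp]: "jmul 0 b = 0"
  by (simp add: jmul_def)

lemma jmul_zero_right [simp]: "jmul a 0 = 0"
  by (simp add: jmul_def)

lemma jmul_diff_left: "jmul (a - b) c = jmul a c - jmul b c"
  using jmul_add_left[of "a - b" b c] by (simp add: eq_diff_eq)

lemma jmul_diff_right: "jmul a (b - c) = jmul a b - jmul a c"
  using jmul_add_right[of a "b - c" c] by (simp add: eq_diff_eq)

lemma jmul_sum_left: "jmul (\<Sum>i\<in>I. f i) b = (\<Sum>i\<in>I. jmul (f i) b)"
  by (induction I rule: infinite_finite_induct) (auto simp: jmul_add_left)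

lemma jmul_sum_right: "jmul a (\<Sum>i\<in>I. f i) = (\<Sum>i\<in>I. jmul a (f i))"
  by (induction I rule: infinite_finite_induct) (auto simp: jmul_add_right)

lemma jmul_single_single: "jmul (single u c) (single v d) = single (jmono u v) (c * d)"
  by (subst jmul_eq_sum_over[where A = "{u}" and B = "{v}"]) auto

lemma jmul_single_left:
  "jmul (single u c) b = (\<Sum>v\<in>keys b. single (jmono u v) (c * lookup b v))"
  by (subst jmul_eq_sum_over[where A = "{u}" and B = "keys b"]) auto

lemma jmul_single_right:
  "jmul a (single v c) = (\<Sum>u\<in>keys a. single (jmono u v) (lookup a u * c))"
  by (subst jmul_eq_sum_over[where A = "keys a" and B = "{v}"]) auto

lemma jmul_assoc: "jmul (jmul a b) c = jmul a (jmul (b::'k::field jac) c)"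
proof -
  let ?s = "\<lambda>(x::'k jac) u. single u (lookup x u)"
  let ?expand = "\<lambda>x. \<Sum>u\<in>keys x. ?s x u"
  have "jmul (jmul a b) c = jmul (jmul (?expand a) (?expand b)) (?expand c)"
    by (simp only: poly_mapping_sum_single[symmetric])
  also have "\<dots> = (\<Sum>u\<in>keys a. \<Sum>v\<in>keys b. \<Sum>w\<in>keys c. jmul (jmul (?s a u) (?s b v)) (?s c w))"
    by (simp only: jmul_sum_left jmul_sum_right sum.swap[where A = "keys c"]
        sum.swap[where A = "keys b" and B = "keys a"])
  also have "\<dots> = (\<Sum>u\<in>keys a. \<Sum>v\<in>keys b. \<Sum>w\<in>keys c. jmul (?s a u) (jmul (?s b v) (?s c w)))"
    by (simp add: jmul_single_single jmono_assoc mult.assoc)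
  also have "\<dots> = jmul (?expand a) (jmul (?expand b) (?expand c))"
    by (simp only: jmul_sum_left jmul_sum_right sum.swap[where A = "keys c"]
        sum.swap[where A = "keys b" and B = "keys a"])
  finally show ?thesis
    by (simp only: poly_mapping_sum_single[symmetric])
qed

lemma jmul_one_left [simp]: "jmul jone a = a"
proof -
  have "jmul jone a = (\<Sum>v\<in>keys a. single v (lookup a v))"
    unfolding jone_def jmul_single_left by (simp add: jmono_def)
  then show ?thesis
    using poly_mapping_sum_single[of a] by simp
qed

lemma lookup_jmul_single_left:
  "lookup (jmul (single u c) b) w = c * (\<Sum>v\<in>keys b. if jmono u v = w then lookup b v else 0)"
  unfolding jmul_single_left lookup_sum lookup_single sum_distrib_left
  by (rule sum.cong) (auto simp: when_def)

lemma lookup_jmul_single_right: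
  "lookup (jmul b (single u c)) w = (\<Sum>v\<in>keys b. if jmono v u = w then lookup b v else 0) * c"
  unfolding jmul_single_right lookup_sum lookup_single sum_distrib_right
  by (rule sum.cong) (auto simp: when_def)

lemma keys_jmul_single_left: "keys (jmul (single u c) b) \<subseteq> jmono u ` keys b"
proof
  fix w
  assume "w \<in> keys (jmul (single u c) b)"
  then have "(\<Sum>v\<in>keys b. if jmono u v = w then lookup b v else 0) \<noteq> 0"
    by (simp add: in_keys_iff lookup_jmul_single_left)
  then obtain v where "v \<in> keys b" "(if jmono u v = w then lookup b v else 0) \<noteq> 0"
    using sum.not_neutral_contains_not_neutral by blast
  then show "w \<in> jmono u ` keys b"
    by (auto split: if_splits)
qed

lemma sum_lookup_if_eq: "(\<Sum>v\<in>keys b. if v = w then lookup b v else 0) = lookup b w"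
  by (cases "w \<in> keys b") (auto simp: sum.delta in_keys_iff)

definition jscale :: "'k::field \<Rightarrow> 'k jac \<Rightarrow> 'k jac" where
  "jscale c a = jmul (single (0,0) c) a"

lemma lookup_jscale [simp]: "lookup (jscale c a) w = c * lookup a w"
  unfolding jscale_def lookup_jmul_single_left by (simp add: jmono_def sum_lookup_if_eq)

lemma jmul_scalar_right: "jmul a (single (0,0) c) = jscale c a"
  by (rule poly_mapping_eqI) (simp add: lookup_jmul_single_right jmono_def sum_lookup_if_eq)

lemma jscale_jmul_left: "jmul (jscale c a) b = jscale c (jmul a b)"
  unfolding jscale_def by (simp add: jmul_assoc)

lemma jscale_jmul_right: "jmul a (jscale c b) = jscale c (jmul a b)"
proof -
  have "jmul a (jscale c b) = jmul (jmul a (single (0,0) c)) b"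
    unfolding jscale_def by (simp add: jmul_assoc)
  then show ?thesis
    by (simp add: jmul_scalar_right jscale_jmul_left)
qed

lemma jscale_jscale [simp]: "jscale c (jscale d a) = jscale (c * d) a"
  by (rule poly_mapping_eqI) simp

lemma jscale_one [simp]: "jscale 1 a = a"
  by (rule poly_mapping_eqI) simp

lemma jscale_zero [simp]: "jscale 0 a = 0"
  by (rule poly_mapping_eqI) simp

lemma jscale_minus_one: "jscale (-1) a = - a"
  by (rule poly_mapping_eqI) simp

definition jmon :: "nat \<Rightarrow> nat \<Rightarrow> 'k::field jac" where
  "jmon i j = single (i,j) 1"

definition jidem :: "'k::field jac" where
  "jidem = jmon 0 0 - jmon 1 1"

lemma jmon_mult: "jmul (jmon i j) (jmon k l) = jmon (i + (k - j)) (l + (j - k))"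
  unfolding jmon_def by (simp add: jmul_single_single jmono_def)

lemma jmon_0_0: "jmon 0 0 = jone"
  by (simp add: jmon_def jone_def)

lemma jone_minus_yx: "jone - jmul jy jx = (jidem :: 'k::field jac)"
  by (simp add: jone_def jy_def jx_def jidem_def jmon_def jmul_single_single jmono_def)

lemma jidem_mult_single: "fst u \<ge> 1 \<Longrightarrow> jmul jidem (single u c) = (0::'k::field jac)"
  by (cases u) (simp add: jidem_def jmon_def jmul_diff_left jmul_single_single jmono_def)

lemma single_mult_jidem: "snd u \<ge> 1 \<Longrightarrow> jmul (single u c) jidem = (0::'k::field jac)"
  by (cases u) (simp add: jidem_def jmon_def jmul_diff_right jmul_single_single jmono_def)

lemma jidem_idem: "jmul jidem jidem = (jidem::'k::field jac)"
  by (simp add: jidem_def jmon_def jmul_diff_right jmul_diff_left jmul_single_single jmono_def)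

lemma jidem_mult_eq_0:
  assumes "\<And>j. lookup c (0,j) = 0"
  shows "jmul jidem c = (0::'k::field jac)"
proof -
  have "jmul jidem c = (\<Sum>u\<in>keys c. jmul jidem (single u (lookup c u)))"
    by (subst poly_mapping_sum_single[of c]) (simp add: jmul_sum_right)
  also have "\<dots> = 0"
  proof (rule sum.neutral, rule ballI)
    fix u
    assume "u \<in> keys c"
    then have "fst u \<noteq> 0"
      using assms by (metis in_keys_iff prod.collapse)
    then have "fst u \<ge> 1"
      by simp
    then show "jmul jidem (single u (lookup c u)) = 0"
      by (rule jidem_mult_single)
  qed
  finally show ?thesis .
qed

lemma jidem_corner: "jmul jidem (jmul r jidem) = jscale (lookup r (0,0)) (jidem::'k::field jac)"
proof -
  have "jmul jidem (jmul r jidem) = (\<Sum>u\<in>keys r. jmul jidem (jmul (single u (lookup r u)) jidem))"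
    by (subst poly_mapping_sum_single[of r]) (simp add: jmul_sum_right jmul_sum_left)
  also have "\<dots> = (\<Sum>u\<in>keys r. if u = (0,0) then jscale (lookup r u) jidem else 0)"
  proof (rule sum.cong[OF refl])
    fix u :: "nat \<times> nat"
    consider "u = (0,0)" | "fst u \<ge> 1" | "snd u \<ge> 1"
      by (metis less_one not_le prod.collapse)
    then show "jmul jidem (jmul (single u (lookup r u)) jidem)
        = (if u = (0,0) then jscale (lookup r u) jidem else 0)"
      by cases (auto simp: jmul_assoc[symmetric] jmul_scalar_right jscale_jmul_left jidem_idem
          jidem_mult_single single_mult_jidem)
  qed
  also have "\<dots> = jscale (lookup r (0,0)) jidem"
    by (cases "(0::nat, 0::nat) \<in> keys r") (auto simp: sum.delta in_keys_iff)
  finally show ?thesis .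
qed

section \<open>The kernel of the map onto the Laurent polynomials\<close>

text \<open>laurent_coeff d a is the coefficient of t^d in the image of a under
  x \<mapsto> t, y \<mapsto> 1/t, which sends y^i x^j to t^(j-i).\<close>

definition laurent_deg :: "nat \<times> nat \<Rightarrow> int" where
  "laurent_deg u = int (snd u) - int (fst u)"

definition laurent_coeff :: "int \<Rightarrow> 'k::field jac \<Rightarrow> 'k" where
  "laurent_coeff d a = (\<Sum>u\<in>keys a. if laurent_deg u = d then lookup a u else 0)"

definition laurent_ker :: "'k::field jac set" where
  "laurent_ker = {a. \<forall>d. laurent_coeff d a = 0}"

lemma laurent_deg_jmono: "laurent_deg (jmono u v) = laurent_deg u + laurent_deg v"
  unfolding laurent_deg_def jmono_def by (cases u; cases v) auto

lemma laurent_coeff_eq_sum_over: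
  "finite A \<Longrightarrow> keys a \<subseteq> A \<Longrightarrow>
    laurent_coeff d a = (\<Sum>u\<in>A. if laurent_deg u = d then lookup a u else 0)"
  unfolding laurent_coeff_def by (rule sum.mono_neutral_left) (auto simp: in_keys_iff)

lemma laurent_coeff_add: "laurent_coeff d (a + b) = laurent_coeff d a + laurent_coeff d b"
proof -
  let ?A = "keys a \<union> keys b \<union> keys (a + b)"
  have "laurent_coeff d (a + b) = (\<Sum>u\<in>?A. if laurent_deg u = d then lookup (a + b) u else 0)"
    "laurent_coeff d a = (\<Sum>u\<in>?A. if laurent_deg u = d then lookup a u else 0)"
    "laurent_coeff d b = (\<Sum>u\<in>?A. if laurent_deg u = d then lookup b u else 0)"
    by (rule laurent_coeff_eq_sum_over; auto)+
  moreover have "(\<Sum>u\<in>?A. if laurent_deg u = d then lookup (a + b) u else 0)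
      = (\<Sum>u\<in>?A. if laurent_deg u = d then lookup a u else 0)
        + (\<Sum>u\<in>?A. if laurent_deg u = d then lookup b u else 0)"
    unfolding sum.distrib[symmetric] by (rule sum.cong) (auto simp: lookup_add)
  ultimately show ?thesis
    by simp
qed

lemma laurent_coeff_zero [simp]: "laurent_coeff d 0 = 0"
  by (simp add: laurent_coeff_def)

lemma laurent_coeff_diff: "laurent_coeff d (a - b) = laurent_coeff d a - laurent_coeff d b"
  using laurent_coeff_add[of d "a - b" b] by simp

lemma laurent_coeff_sum: "laurent_coeff d (\<Sum>i\<in>I. f i) = (\<Sum>i\<in>I. laurent_coeff d (f i))"
  by (induction I rule: infinite_finite_induct) (auto simp: laurent_coeff_add)

lemma laurent_coeff_single: "laurent_coeff d (single w c) = (if laurent_deg w = d then c else 0)"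
  by (simp add: laurent_coeff_def)

lemma laurent_coeff_jmul_single_left:
  "laurent_coeff d (jmul (single u c) b) = c * laurent_coeff (d - laurent_deg u) b"
proof -
  have "laurent_coeff d (jmul (single u c) b)
      = (\<Sum>v\<in>keys b. if laurent_deg u + laurent_deg v = d then c * lookup b v else 0)"
    by (simp add: jmul_single_left laurent_coeff_sum laurent_coeff_single laurent_deg_jmono)
  also have "\<dots> = c * laurent_coeff (d - laurent_deg u) b"
    unfolding laurent_coeff_def sum_distrib_left by (rule sum.cong) auto
  finally show ?thesis .
qed

lemma laurent_coeff_jmul_single_right:
  "laurent_coeff d (jmul b (single u c)) = laurent_coeff (d - laurent_deg u) b * c"
proof -
  have "laurent_coeff d (jmul b (single u c))
      = (\<Sum>v\<in>keys b. if laurent_deg v + laurent_deg u = d then lookup b v * c else 0)"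
    by (simp add: jmul_single_right laurent_coeff_sum laurent_coeff_single laurent_deg_jmono)
  also have "\<dots> = laurent_coeff (d - laurent_deg u) b * c"
    unfolding laurent_coeff_def sum_distrib_right by (rule sum.cong) auto
  finally show ?thesis .
qed

lemma laurent_ker_jmul_left: "a \<in> laurent_ker \<Longrightarrow> jmul r a \<in> laurent_ker"
  by (subst poly_mapping_sum_single[of r])
    (simp add: laurent_ker_def jmul_sum_left laurent_coeff_sum laurent_coeff_jmul_single_left)

lemma laurent_ker_jmul_right: "a \<in> laurent_ker \<Longrightarrow> jmul a r \<in> laurent_ker"
  by (subst poly_mapping_sum_single[of r])
    (simp add: laurent_ker_def jmul_sum_right laurent_coeff_sum laurent_coeff_jmul_single_right)

lemma laurent_ker_add: "a \<in> laurent_ker \<Longrightarrow> b \<in> laurent_ker \<Longrightarrow> a + b \<in> laurent_ker"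
  by (simp add: laurent_ker_def laurent_coeff_add)

lemma laurent_ker_zero: "0 \<in> laurent_ker"
  by (simp add: laurent_ker_def)

lemma jidem_in_laurent_ker: "(jidem::'k::field jac) \<in> laurent_ker"
  by (simp add: laurent_ker_def jidem_def jmon_def laurent_coeff_diff laurent_coeff_single laurent_deg_def)

lemma jI_subset_laurent_ker: "(jI :: 'k::field jac set) \<subseteq> laurent_ker"
proof -
  have "two_sided_ideal (laurent_ker::'k jac set)"
    by (auto simp: two_sided_ideal_def left_ideal_def laurent_ker_zero laurent_ker_add
        laurent_ker_jmul_left laurent_ker_jmul_right)
  moreover have "jone - jmul jy jx \<in> (laurent_ker::'k jac set)"
    by (simp add: jone_minus_yx jidem_in_laurent_ker)
  ultimately show ?thesis
    unfolding jI_def by blast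
qed

lemma lookup_jpoly: "lookup (jpoly f) u = (if fst u = 0 then coeff f (snd u) else 0)"
proof -
  have "lookup (jpoly f) u = (\<Sum>k\<le>degree f. if k = snd u \<and> fst u = 0 then coeff f k else 0)"
    unfolding jpoly_def lookup_sum lookup_single by (rule sum.cong) (auto simp: when_def prod_eq_iff)
  then show ?thesis
    by (cases "snd u \<le> degree f") (auto simp: coeff_eq_0 sum.delta')
qed

lemma jpoly_add: "jpoly (f + h) = jpoly f + jpoly h"
  by (rule poly_mapping_eqI) (simp add: lookup_jpoly lookup_add)

lemma jpoly_smult: "jpoly (smult c f) = jscale c (jpoly f)"
  by (rule poly_mapping_eqI) (simp add: lookup_jpoly)

lemma jpoly_monom: "jpoly (monom c n) = single (0,n) c"
  by (rule poly_mapping_eqI) (auto simp: lookup_jpoly lookup_single when_def coeff_monom)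

lemma jpoly_zero [simp]: "jpoly 0 = 0"
  by (rule poly_mapping_eqI) (simp add: lookup_jpoly)

lemma jpoly_sum: "jpoly (\<Sum>i\<in>I. f i) = (\<Sum>i\<in>I. jpoly (f i))"
  by (induction I rule: infinite_finite_induct) (auto simp: jpoly_add)

lemma jpoly_mult: "jpoly (f * h) = jmul (jpoly f) (jpoly (h::'k::field poly))"
proof -
  let ?F = "\<lambda>i. monom (coeff f i) i" and ?H = "\<lambda>j. monom (coeff h j) j"
  have "f * h = (\<Sum>i\<le>degree f. ?F i) * (\<Sum>j\<le>degree h. ?H j)"
    by (simp add: poly_as_sum_of_monoms)
  also have "\<dots> = (\<Sum>i\<le>degree f. \<Sum>j\<le>degree h. monom (coeff f i * coeff h j) (i + j))"
    by (simp add: sum_product mult_monom)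
  finally have "jpoly (f * h) = (\<Sum>i\<le>degree f. \<Sum>j\<le>degree h. single (0, i + j) (coeff f i * coeff h j))"
    by (simp add: jpoly_sum jpoly_monom)
  also have "\<dots> = jmul (\<Sum>i\<le>degree f. jpoly (?F i)) (\<Sum>j\<le>degree h. jpoly (?H j))"
    by (simp add: jpoly_monom jmul_sum_left jmul_sum_right jmul_single_single jmono_def add.commute
        sum.swap[where A = "{..degree h}"])
  also have "\<dots> = jmul (jpoly f) (jpoly h)"
    by (simp only: jpoly_sum[symmetric] poly_as_sum_of_monoms)
  finally show ?thesis .
qed

lemma ex_poly_coeff_eq_row0: "\<exists>f. \<forall>j. coeff f j = lookup (b::'k::field jac) (0,j)"
proof -
  obtain N where N: "\<forall>n\<in>snd ` keys b. n \<le> N"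
    using finite_nat_set_iff_bounded_le[of "snd ` keys b"] by auto
  let ?f = "Poly (map (\<lambda>j. lookup b (0,j)) [0..<Suc N])"
  have "coeff ?f j = lookup b (0,j)" for j
  proof (cases "j < Suc N")
    case False
    then have "(0,j) \<notin> keys b"
      using N by (metis Suc_le_eq image_eqI not_less snd_conv)
    with False show ?thesis
      by (simp add: nth_default_def in_keys_iff)
  qed (simp add: nth_default_def del: upt_Suc)
  then show ?thesis
    by blast
qed

lemma ex_jpoly_eq_if_row0:
  assumes "\<forall>u\<in>keys b. fst u = 0"
  shows "\<exists>f. b = jpoly (f::'k::field poly)"
proof -
  obtain f where f: "\<forall>j. coeff f j = lookup b (0,j)"
    using ex_poly_coeff_eq_row0 by blast
  have "b = jpoly f"
  proof (rule poly_mapping_eqI)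
    fix u :: "nat \<times> nat"
    have "fst u \<noteq> 0 \<Longrightarrow> lookup b u = 0"
      using assms by (metis in_keys_iff)
    then show "lookup b u = lookup (jpoly f) u"
      by (cases u) (auto simp: lookup_jpoly f)
  qed
  then show ?thesis
    by blast
qed

definition jrow :: "'k::field poly \<Rightarrow> 'k jac" where
  "jrow f = jmul jidem (jpoly f)"

lemma jrow_zero [simp]: "jrow 0 = 0"
  by (simp add: jrow_def)

lemma jrow_add: "jrow (f + h) = jrow f + jrow h"
  by (simp add: jrow_def jpoly_add jmul_add_right)

lemma jrow_smult: "jrow (smult c f) = jscale c (jrow f)"
  by (simp add: jrow_def jpoly_smult jscale_jmul_right)

lemma jrow_mult: "jrow (f * h) = jmul (jrow f) (jpoly h)"
  by (simp add: jrow_def jpoly_mult jmul_assoc)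

lemma jidem_mult_eq_jrow: "\<exists>f. jmul jidem b = jrow (f::'k::field poly)"
proof -
  obtain f where f: "\<forall>j. coeff f j = lookup b (0,j)"
    using ex_poly_coeff_eq_row0 by blast
  have "jmul jidem (b - jpoly f) = 0"
    by (rule jidem_mult_eq_0) (simp add: lookup_minus lookup_jpoly f)
  then show ?thesis
    by (auto simp: jrow_def jmul_diff_right)
qed

section \<open>Decomposition along the diagonal matrix units\<close>

definition diag_part :: "nat \<Rightarrow> 'k::field jac \<Rightarrow> 'k jac" where
  "diag_part i b = jmul (jmon i 0) (jmul jidem (jmul (jmon 0 i) b))"

lemma diag_unit_eq:
  "jmul (jmul (jmon i 0) jidem) (jmon 0 i) = (jmon i i - jmon (Suc i) (Suc i) :: 'k::field jac)"
  by (simp add: jidem_def jmul_diff_left jmul_diff_right jmon_mult)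

lemma sum_diag_part: "b = (\<Sum>i<k. diag_part i b) + jmul (jmon k k) (b::'k::field jac)"
proof -
  have "(\<Sum>i<k. diag_part i b) = jmul (\<Sum>i<k. jmon i i - jmon (Suc i) (Suc i)) b"
    by (simp add: diag_part_def jmul_sum_left jmul_assoc[symmetric] diag_unit_eq)
  also have "\<dots> = jmul (jmon 0 0 - jmon k k) b"
    using sum_lessThan_telescope'[of "\<lambda>i. jmon i i :: 'k jac" k] by simp
  finally show ?thesis
    by (simp add: jmul_diff_left jmon_0_0)
qed

lemma ex_row_bound: "\<exists>k. \<forall>u\<in>keys (z::'k::field jac). fst u \<le> k"
  using finite_nat_set_iff_bounded_le[of "fst ` keys z"] by auto

text \<open>Left multiplication by y^k x^k sends y^i x^j with i \<le> k to y^k x^(j+k-i): it collects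
  each diagonal into a single coefficient, the diagonal sum.\<close>

lemma jmon_mult_laurent_ker:
  assumes "z \<in> laurent_ker" "\<forall>u\<in>keys z. fst u \<le> k"
  shows "jmul (jmon k k) z = (0::'k::field jac)"
proof (rule poly_mapping_eqI)
  fix w :: "nat \<times> nat"
  obtain wi wj where w: "w = (wi, wj)"
    by (cases w)
  have jm: "v \<in> keys z \<Longrightarrow> jmono (k,k) v = (k, snd v + (k - fst v))" for v
    using assms(2) by (cases v) (auto simp: jmono_def)
  have "lookup (jmul (jmon k k) z) w = (\<Sum>v\<in>keys z. if jmono (k,k) v = w then lookup z v else 0)"
    by (simp add: jmon_def lookup_jmul_single_left)
  also have "\<dots> = (\<Sum>v\<in>keys z. if wi = k \<and> laurent_deg v = int wj - int k then lookup z v else 0)"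
    by (rule sum.cong[OF refl]) (use jm assms(2) in \<open>auto simp: w laurent_deg_def\<close>)
  also have "\<dots> = 0"
    using assms(1) by (cases "wi = k") (simp_all add: laurent_ker_def laurent_coeff_def)
  finally show "lookup (jmul (jmon k k) z) w = lookup 0 w"
    by simp
qed

lemma laurent_ker_eq_sum_diag_part:
  assumes "z \<in> laurent_ker"
  shows "\<exists>k. z = (\<Sum>i<k. diag_part i (z::'k::field jac))"
proof -
  obtain k where "\<forall>u\<in>keys z. fst u \<le> k"
    using ex_row_bound by blast
  then have "jmul (jmon k k) z = 0"
    using jmon_mult_laurent_ker assms by blast
  then show ?thesis
    using sum_diag_part[of z k] by auto
qed

lemma ex_diag_part_neq_0:
  assumes "z \<in> laurent_ker" "z \<noteq> 0"
  shows "\<exists>i. diag_part i (z::'k::field jac) \<noteq> 0"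
proof (rule ccontr)
  assume "\<not> ?thesis"
  then have "(\<Sum>i<k. diag_part i z) = 0" for k
    by simp
  then show False
    using laurent_ker_eq_sum_diag_part[OF assms(1)] assms(2) by metis
qed

lemma keys_jmon_mult_row0:
  assumes "\<forall>u\<in>keys b. fst u \<le> k"
  shows "\<forall>u\<in>keys (jmul (jmon 0 k) (b::'k::field jac)). fst u = 0"
proof
  fix u
  assume "u \<in> keys (jmul (jmon 0 k) b)"
  then obtain v where "v \<in> keys b" "u = jmono (0,k) v"
    using keys_jmul_single_left[of "(0,k)" 1 b] unfolding jmon_def by blast
  then show "fst u = 0"
    using assms by (auto simp: jmono_def)
qed

lemma obtain_jpoly_mult_notin_laurent_ker:
  assumes "a \<notin> laurent_ker"
  obtains k and g :: "'k::field poly" where "jmul (jmon 0 k) a = jpoly g" "g \<noteq> 0"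
proof -
  obtain k where k: "\<forall>u\<in>keys a. fst u \<le> k"
    using ex_row_bound by blast
  obtain g where g: "jmul (jmon 0 k) a = jpoly g"
    using ex_jpoly_eq_if_row0[OF keys_jmon_mult_row0[OF k]] by metis
  obtain d where d: "laurent_coeff d a \<noteq> 0"
    using assms unfolding laurent_ker_def by blast
  have "laurent_coeff (d + int k) (jmul (jmon 0 k) a) = laurent_coeff d a"
    by (simp add: jmon_def laurent_coeff_jmul_single_left laurent_deg_def)
  then have "jmul (jmon 0 k) a \<notin> laurent_ker"
    using d unfolding laurent_ker_def by (auto intro!: exI[of _ "d + int k"])
  then have "g \<noteq> 0"
    using g laurent_ker_zero by auto
  then show ?thesis
    using that g by blast
qed

lemma left_ideal_zero: "left_ideal L \<Longrightarrow> 0 \<in> L"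
  by (simp add: left_ideal_def)

lemma left_ideal_add: "left_ideal L \<Longrightarrow> a \<in> L \<Longrightarrow> b \<in> L \<Longrightarrow> a + b \<in> L"
  by (simp add: left_ideal_def)

lemma left_ideal_jmul: "left_ideal L \<Longrightarrow> a \<in> L \<Longrightarrow> jmul r a \<in> L"
  by (simp add: left_ideal_def)

lemma left_ideal_jscale: "left_ideal L \<Longrightarrow> a \<in> L \<Longrightarrow> jscale c a \<in> L"
  by (simp add: jscale_def left_ideal_jmul)

lemma left_ideal_diff: "left_ideal L \<Longrightarrow> a \<in> L \<Longrightarrow> b \<in> L \<Longrightarrow> a - b \<in> L"
  using left_ideal_add[of L a "jscale (-1) b"] left_ideal_jscale[of L b "-1"]
  by (simp add: jscale_minus_one)

lemma left_ideal_sum: "left_ideal L \<Longrightarrow> (\<And>i. i \<in> I \<Longrightarrow> f i \<in> L) \<Longrightarrow> (\<Sum>i\<in>I. f i) \<in> L"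
  by (induction I rule: infinite_finite_induct) (auto simp: left_ideal_zero left_ideal_add)

lemma left_ideal_diag_part: "left_ideal L \<Longrightarrow> b \<in> L \<Longrightarrow> diag_part i b \<in> L"
  unfolding diag_part_def by (intro left_ideal_jmul)

lemma left_ideal_lprinc: "left_ideal (lprinc a)"
  unfolding left_ideal_def lprinc_def
  by (auto simp: jmul_add_left[symmetric] jmul_assoc[symmetric] intro: exI[of _ 0])

lemma in_lprinc_self: "a \<in> lprinc a"
  unfolding lprinc_def by (auto intro: exI[of _ jone])

lemma lprinc_subset: "left_ideal L \<Longrightarrow> a \<in> L \<Longrightarrow> lprinc a \<subseteq> L"
  unfolding lprinc_def by (auto simp: left_ideal_jmul)

lemma left_ideal_lspan: "left_ideal (lspan G)"
  unfolding left_ideal_def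
proof (intro conjI ballI allI)
  show "0 \<in> lspan G"
    unfolding lspan_def by (auto intro: exI[of _ "{}"])
next
  fix a b
  assume "a \<in> lspan G" "b \<in> lspan G"
  then obtain F1 c1 F2 c2
    where a: "a = (\<Sum>g\<in>F1. jmul (c1 g) g)" "finite F1" "F1 \<subseteq> G"
      and b: "b = (\<Sum>g\<in>F2. jmul (c2 g) g)" "finite F2" "F2 \<subseteq> G"
    unfolding lspan_def by blast
  let ?c = "\<lambda>g. (if g \<in> F1 then c1 g else 0) + (if g \<in> F2 then c2 g else 0)"
  have "(\<Sum>g\<in>F1 \<union> F2. jmul (?c g) g)
      = (\<Sum>g\<in>F1 \<union> F2. if g \<in> F1 then jmul (c1 g) g else 0)
        + (\<Sum>g\<in>F1 \<union> F2. if g \<in> F2 then jmul (c2 g) g else 0)"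
    unfolding sum.distrib[symmetric] by (rule sum.cong[OF refl]) (simp add: jmul_add_left)
  also have "\<dots> = a + b"
    using a b by (simp add: sum.inter_restrict[symmetric] Int_absorb1 Int_absorb2)
  finally show "a + b \<in> lspan G"
    unfolding lspan_def using a b by (auto intro!: exI[of _ "F1 \<union> F2"] exI[of _ ?c])
next
  fix r a
  assume "a \<in> lspan G"
  then obtain F c where a: "a = (\<Sum>g\<in>F. jmul (c g) g)" "finite F" "F \<subseteq> G"
    unfolding lspan_def by blast
  then have "jmul r a = (\<Sum>g\<in>F. jmul (jmul r (c g)) g)"
    by (simp add: jmul_sum_right jmul_assoc)
  then show "jmul r a \<in> lspan G"
    unfolding lspan_def using a by (auto intro!: exI[of _ F])
qed

lemma lspan_superset: "G \<subseteq> lspan G"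
proof
  fix g
  assume "g \<in> G"
  have "g = (\<Sum>h\<in>{g}. jmul jone h)"
    by simp
  then show "g \<in> lspan G"
    unfolding lspan_def using \<open>g \<in> G\<close> by (auto intro!: exI[of _ "{g}"] exI[of _ "\<lambda>_. jone"])
qed

lemma lspan_least: "left_ideal T \<Longrightarrow> G \<subseteq> T \<Longrightarrow> lspan G \<subseteq> T"
  unfolding lspan_def by (auto intro!: left_ideal_sum left_ideal_jmul)

lemma lspan_mono: "G \<subseteq> G' \<Longrightarrow> lspan G \<subseteq> lspan G'"
  using lspan_least[OF left_ideal_lspan, of G G'] lspan_superset[of G'] by blast

lemma fin_genI: "left_ideal T \<Longrightarrow> finite G \<Longrightarrow> G \<subseteq> T \<Longrightarrow> T \<subseteq> lspan G \<Longrightarrow> fin_gen T"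
  unfolding fin_gen_def using lspan_least[of T G] by (metis subset_antisym)

lemma fin_gen_sum_lprinc:
  assumes "fin_gen S" "left_ideal H" "H = {s + t | s t. s \<in> S \<and> t \<in> lprinc a}"
  shows "fin_gen H"
proof -
  obtain G where G: "finite G" "G \<subseteq> S" "S = lspan G"
    using assms(1) unfolding fin_gen_def by blast
  have "0 \<in> S"
    using G(3) left_ideal_lspan left_ideal_zero by blast
  have "0 + a \<in> H"
    unfolding assms(3) using \<open>0 \<in> S\<close> in_lprinc_self[of a] by blast
  moreover have "g + 0 \<in> H" if "g \<in> G" for g
    unfolding assms(3) using that G(2) left_ideal_zero[OF left_ideal_lprinc, of a] by blast
  ultimately have "insert a G \<subseteq> H"
    by auto
  moreover have "H \<subseteq> lspan (insert a G)"
  proof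
    fix h
    assume "h \<in> H"
    then obtain s r where h: "h = s + jmul r a" "s \<in> S"
      using assms(3) unfolding lprinc_def by blast
    have "s \<in> lspan (insert a G)"
      using h(2) G(3) lspan_mono[of G "insert a G"] by blast
    moreover have "jmul r a \<in> lspan (insert a G)"
      using lspan_superset left_ideal_jmul[OF left_ideal_lspan] by blast
    ultimately show "h \<in> lspan (insert a G)"
      using h(1) left_ideal_add[OF left_ideal_lspan] by blast
  qed
  ultimately show ?thesis
    using fin_genI[OF assms(2), of "insert a G"] G(1) by simp
qed

section \<open>Simple left ideals inside the kernel\<close>

lemma jidem_mult_in_lprinc:
  assumes u: "u = jmul jidem b" and n: "n \<in> lprinc u" "n \<noteq> (0::'k::field jac)"
  shows "u \<in> lprinc n"
proof -
  obtain r where r: "n = jmul r u"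
    using n(1) unfolding lprinc_def by blast
  have "n \<in> laurent_ker"
    unfolding r u by (intro laurent_ker_jmul_left laurent_ker_jmul_right jidem_in_laurent_ker)
  then obtain i where "diag_part i n \<noteq> 0"
    using ex_diag_part_neq_0[OF _ n(2)] by blast
  then have nonzero: "jmul jidem (jmul (jmon 0 i) n) \<noteq> 0"
    unfolding diag_part_def by auto
  define c where "c = lookup (jmul (jmon 0 i) r) (0,0)"
  have "jmul jidem (jmul (jmon 0 i) n) = jmul (jmul jidem (jmul (jmul (jmon 0 i) r) jidem)) b"
    unfolding r u by (simp add: jmul_assoc)
  also have "\<dots> = jscale c u"
    unfolding jidem_corner u c_def by (simp add: jscale_jmul_left)
  finally have c: "jmul jidem (jmul (jmon 0 i) n) = jscale c u" .
  have "c \<noteq> 0"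
  proof
    assume "c = 0"
    then show False
      using nonzero c by simp
  qed
  then have "jscale (inverse c) (jmul jidem (jmul (jmon 0 i) n)) = u"
    using c by simp
  then have "u = jmul (jmul (single (0,0) (inverse c)) (jmul jidem (jmon 0 i))) n"
    by (simp add: jscale_def jmul_assoc)
  then show ?thesis
    unfolding lprinc_def by blast
qed

lemma simple_lprinc_jidem_mult:
  assumes u: "u = jmul jidem b" "u \<noteq> (0::'k::field jac)"
  shows "simple_li (lprinc u)"
  unfolding simple_li_def
proof (intro conjI allI impI)
  show "left_ideal (lprinc u)"
    by (rule left_ideal_lprinc)
  show "lprinc u \<noteq> {0}"
    using in_lprinc_self[of u] u(2) by blast
  fix N
  assume N: "left_ideal N" "N \<subseteq> lprinc u"
  show "N = {0} \<or> N = lprinc u"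
  proof (cases "N = {0}")
    case False
    then obtain n where n: "n \<in> N" "n \<noteq> 0"
      using left_ideal_zero[OF N(1)] by blast
    then have "u \<in> lprinc n"
      using jidem_mult_in_lprinc[OF u(1) _ n(2)] N(2) by blast
    then have "u \<in> N"
      using lprinc_subset[OF N(1) n(1)] by blast
    then show ?thesis
      by (intro disjI2 subset_antisym N(2) lprinc_subset[OF N(1)])
  qed simp
qed

lemma simple_lprinc_diag_part:
  assumes "diag_part i b \<noteq> (0::'k::field jac)"
  shows "simple_li (lprinc (diag_part i b))"
proof -
  define u where "u = jmul jidem (jmul (jmon 0 i) b)"
  have tu: "diag_part i b = jmul (jmon i 0) u"
    unfolding diag_part_def u_def ..
  have ut: "u = jmul (jmon 0 i) (diag_part i b)"
    unfolding tu by (simp add: jmul_assoc[symmetric] jmon_mult jmon_0_0)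
  have "diag_part i b \<in> lprinc u" "u \<in> lprinc (diag_part i b)"
    unfolding lprinc_def using tu ut by blast+
  then have "lprinc (diag_part i b) = lprinc u"
    by (intro subset_antisym lprinc_subset[OF left_ideal_lprinc])
  moreover have "u \<noteq> 0"
    using assms tu by auto
  ultimately show ?thesis
    using simple_lprinc_jidem_mult[OF u_def] by simp
qed

lemma semisimple_if_subset_laurent_ker:
  assumes L: "left_ideal L" and LJ: "L \<subseteq> laurent_ker"
  shows "semisimple_li L"
  unfolding semisimple_li_def
proof (intro conjI ballI)
  fix a
  assume a: "a \<in> L"
  obtain k where k: "a = (\<Sum>i<k. diag_part i a)"
    using laurent_ker_eq_sum_diag_part LJ a by blast
  show "\<exists>(n::nat) f S. (\<forall>i<n. simple_li (S i) \<and> S i \<subseteq> L \<and> f i \<in> S i) \<and> a = (\<Sum>i<n. f i)"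
  proof (cases "a = 0")
    case True
    show ?thesis
      by (intro exI[where x = 0]) (simp add: True)
  next
    case False
    then obtain i0 where i0: "diag_part i0 a \<noteq> 0"
      using ex_diag_part_neq_0[OF subsetD[OF LJ a] False] by blast
    text \<open>Zero components are placed in an arbitrary simple summand.\<close>
    define j where "j i = (if diag_part i a = 0 then i0 else i)" for i
    define S where "S i = lprinc (diag_part (j i) a)" for i
    have "\<forall>i<k. simple_li (S i) \<and> S i \<subseteq> L \<and> diag_part i a \<in> S i"
    proof (intro allI impI)
      fix i
      have "diag_part (j i) a \<noteq> 0"
        using i0 unfolding j_def by simp
      moreover have "diag_part i a \<in> lprinc (diag_part (j i) a)"
        unfolding j_def by (simp add: in_lprinc_self left_ideal_zero[OF left_ideal_lprinc])
      ultimately show "simple_li (S i) \<and> S i \<subseteq> L \<and> diag_part i a \<in> S i"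
        unfolding S_def
        using simple_lprinc_diag_part lprinc_subset[OF L left_ideal_diag_part[OF L a]] by blast
    qed
    then show ?thesis
      using k by (intro exI[of _ k] exI[of _ "\<lambda>i. diag_part i a"] exI[of _ S]) (simp only:)
  qed
qed (rule L)

section \<open>Remainder degrees of spaces of polynomials\<close>

definition poly_subspace :: "'k::field poly set \<Rightarrow> bool" where
  "poly_subspace W \<longleftrightarrow> 0 \<in> W \<and> (\<forall>a\<in>W. \<forall>b\<in>W. a + b \<in> W) \<and> (\<forall>c. \<forall>a\<in>W. smult c a \<in> W)"

lemma poly_subspace_diff: "poly_subspace W \<Longrightarrow> a \<in> W \<Longrightarrow> b \<in> W \<Longrightarrow> a - b \<in> W"
  unfolding poly_subspace_def by (metis diff_conv_add_uminus smult_minus_left smult_1_left)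

definition rem_degrees :: "'k::field poly \<Rightarrow> 'k poly set \<Rightarrow> nat set" where
  "rem_degrees g W = {degree (f mod g) | f. f \<in> W \<and> f mod g \<noteq> 0}"

lemma rem_degrees_subset: "g \<noteq> 0 \<Longrightarrow> rem_degrees g W \<subseteq> {..<degree g}"
  unfolding rem_degrees_def using degree_mod_less' by fastforce

lemma finite_rem_degrees: "g \<noteq> 0 \<Longrightarrow> finite (rem_degrees g W)"
  using rem_degrees_subset finite_subset by blast

lemma card_rem_degrees_le: "g \<noteq> 0 \<Longrightarrow> card (rem_degrees g W) \<le> degree g"
  using card_mono[OF finite_lessThan rem_degrees_subset] by fastforce

lemma rem_degrees_mono: "W \<subseteq> W' \<Longrightarrow> rem_degrees g W \<subseteq> rem_degrees g W'"
  unfolding rem_degrees_def by blast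

text \<open>Gaussian elimination on the remainders: if the larger space produces no new remainder degree,
  each of its elements is congruent modulo g to an element of the smaller one.\<close>

lemma congruent_mod_if_rem_degrees_subset:
  assumes W: "poly_subspace W" and W': "poly_subspace W'" and sub: "W \<subseteq> W'"
    and deg: "rem_degrees g W' \<subseteq> rem_degrees g W" and f: "f \<in> W'"
  shows "\<exists>w\<in>W. g dvd (f - w)"
  using f
proof (induction "degree (f mod g)" arbitrary: f rule: less_induct)
  case (less f)
  show ?case
  proof (cases "f mod g = 0")
    case True
    then show ?thesis
      using W unfolding poly_subspace_def by (intro bexI[of _ 0]) (auto simp: mod_eq_0_iff_dvd)
  next
    case False
    then have "degree (f mod g) \<in> rem_degrees g W"
      using deg less.prems unfolding rem_degrees_def by blast
    then obtain w0 where w0: "w0 \<in> W" "w0 mod g \<noteq> 0" "degree (w0 mod g) = degree (f mod g)"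
      unfolding rem_degrees_def by auto
    define c where "c = lead_coeff (f mod g) / lead_coeff (w0 mod g)"
    define f1 where "f1 = f - smult c w0"
    have f1W: "f1 \<in> W'"
      unfolding f1_def using poly_subspace_diff[OF W' less.prems] sub w0(1) W
      unfolding poly_subspace_def by blast
    have f1_mod: "f1 mod g = f mod g - smult c (w0 mod g)"
      unfolding f1_def by (simp add: poly_mod_diff_left mod_smult_left)
    have "coeff (w0 mod g) (degree (f mod g)) \<noteq> 0"
      using w0(2,3) by (metis leading_coeff_0_iff)
    then have "coeff (f1 mod g) (degree (f mod g)) = 0"
      using w0(3) by (simp add: f1_mod c_def)
    moreover have "degree (f1 mod g) \<le> degree (f mod g)"
      unfolding f1_mod using w0(3) by (intro degree_diff_le) (auto simp: degree_smult_le)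
    ultimately have "f1 mod g = 0 \<or> degree (f1 mod g) < degree (f mod g)"
      by (metis le_neq_implies_less leading_coeff_0_iff)
    moreover have "0 \<in> W"
      using W unfolding poly_subspace_def by blast
    ultimately obtain w1 where w1: "w1 \<in> W" "g dvd (f1 - w1)"
      using less.hyps[OF _ f1W] by (auto simp: mod_eq_0_iff_dvd)
    have "smult c w0 + w1 \<in> W"
      using W w0(1) w1(1) unfolding poly_subspace_def by blast
    moreover have "f - (smult c w0 + w1) = f1 - w1"
      unfolding f1_def by simp
    ultimately show ?thesis
      using w1(2) by metis
  qed
qed

lemma card_rem_degrees_less:
  assumes W: "poly_subspace W" and W': "poly_subspace W'" and sub: "W \<subset> W'" and g: "g \<noteq> 0"
    and multiples: "\<forall>h\<in>W'. g dvd h \<longrightarrow> h \<in> W"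
  shows "card (rem_degrees g W) < card (rem_degrees g W')"
proof (rule ccontr)
  assume le: "\<not> ?thesis"
  have mono: "rem_degrees g W \<subseteq> rem_degrees g W'"
    using sub by (intro rem_degrees_mono) blast
  have "rem_degrees g W = rem_degrees g W'"
    by (rule card_seteq[OF finite_rem_degrees[OF g] mono]) (use le in linarith)
  then have eq: "rem_degrees g W' \<subseteq> rem_degrees g W"
    by simp
  have "W' \<subseteq> W"
  proof
    fix f
    assume "f \<in> W'"
    then obtain w where w: "w \<in> W" "g dvd (f - w)"
      using congruent_mod_if_rem_degrees_subset[OF W W' _ eq] sub by blast
    have "f - w \<in> W"
      using multiples w poly_subspace_diff[OF W' \<open>f \<in> W'\<close>] sub by blast
    then show "f \<in> W"
      using W w(1) unfolding poly_subspace_def by (metis diff_add_cancel)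
  qed
  then show False
    using sub by blast
qed

section \<open>Polynomial invariants of a left ideal\<close>

definition row_polys :: "'k::field jac set \<Rightarrow> 'k poly set" where
  "row_polys A = {f. jrow f \<in> A}"

definition residue_polys :: "'k::field jac set \<Rightarrow> 'k poly set" where
  "residue_polys A = {f. \<exists>c\<in>A. jpoly f - c \<in> laurent_ker}"

lemma poly_subspace_row_polys: "left_ideal A \<Longrightarrow> poly_subspace (row_polys A)"
  unfolding poly_subspace_def row_polys_def
  by (auto simp: jrow_add jrow_smult left_ideal_zero left_ideal_add left_ideal_jscale)

lemma poly_subspace_residue_polys:
  assumes A: "left_ideal A"
  shows "poly_subspace (residue_polys A)"
  unfolding poly_subspace_def
proof (intro conjI ballI allI)
  show "0 \<in> residue_polys A"
    unfolding residue_polys_def using left_ideal_zero[OF A] laurent_ker_zero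
    by (auto simp: jpoly_def intro!: bexI[of _ 0])
next
  fix f h
  assume "f \<in> residue_polys A" "h \<in> residue_polys A"
  then obtain c1 c2 where c: "c1 \<in> A" "jpoly f - c1 \<in> laurent_ker" "c2 \<in> A" "jpoly h - c2 \<in> laurent_ker"
    unfolding residue_polys_def by blast
  have "jpoly (f + h) - (c1 + c2) = (jpoly f - c1) + (jpoly h - c2)"
    by (simp add: jpoly_add)
  then have "jpoly (f + h) - (c1 + c2) \<in> laurent_ker"
    using laurent_ker_add[OF c(2) c(4)] by (simp only:)
  moreover have "c1 + c2 \<in> A"
    using c left_ideal_add[OF A] by blast
  ultimately show "f + h \<in> residue_polys A"
    unfolding residue_polys_def by blast
next
  fix c f
  assume "f \<in> residue_polys A"
  then obtain c1 where c1: "c1 \<in> A" "jpoly f - c1 \<in> laurent_ker"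
    unfolding residue_polys_def by blast
  have "jpoly (smult c f) - jscale c c1 = jmul (single (0,0) c) (jpoly f - c1)"
    by (simp add: jpoly_smult jscale_def jmul_diff_right)
  then have "jpoly (smult c f) - jscale c c1 \<in> laurent_ker"
    using laurent_ker_jmul_left[OF c1(2)] by (simp only:)
  then show "smult c f \<in> residue_polys A"
    unfolding residue_polys_def using left_ideal_jscale[OF A c1(1)] by blast
qed

lemma multiple_in_row_polys:
  assumes "left_ideal A" "jpoly g \<in> A" "g dvd h"
  shows "h \<in> row_polys A"
proof -
  obtain q where "h = q * g"
    using assms(3) by (metis dvdE mult.commute)
  then have "jrow h = jmul (jmul jidem (jpoly q)) (jpoly g)"
    by (simp add: jrow_def jpoly_mult jmul_assoc)
  then show ?thesis
    unfolding row_polys_def using left_ideal_jmul[OF assms(1,2)] by simp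
qed

lemma multiple_in_residue_polys:
  assumes "left_ideal A" "jpoly g \<in> A" "g dvd h"
  shows "h \<in> residue_polys A"
proof -
  obtain q where "h = q * g"
    using assms(3) by (metis dvdE mult.commute)
  then have "jpoly h \<in> A"
    using left_ideal_jmul[OF assms(1,2)] by (simp add: jpoly_mult)
  then show ?thesis
    unfolding residue_polys_def using laurent_ker_zero by force
qed

lemma row_polys_mono: "A \<subseteq> A' \<Longrightarrow> row_polys A \<subseteq> row_polys A'"
  unfolding row_polys_def by auto

lemma residue_polys_mono: "A \<subseteq> A' \<Longrightarrow> residue_polys A \<subseteq> residue_polys A'"
  unfolding residue_polys_def by blast

lemma diag_part_in_if_row_polys_subset:
  assumes A: "left_ideal A" and A': "left_ideal A'" and rows: "row_polys A' \<subseteq> row_polys A"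
    and b: "b \<in> A'"
  shows "diag_part i b \<in> A"
proof -
  obtain f where f: "jmul jidem (jmul (jmon 0 i) b) = jrow f"
    using jidem_mult_eq_jrow by blast
  have "jrow f \<in> A'"
    unfolding f[symmetric] by (intro left_ideal_jmul[OF A'] b)
  then have "f \<in> row_polys A'"
    unfolding row_polys_def by blast
  then have "jrow f \<in> A"
    using rows unfolding row_polys_def by blast
  then show ?thesis
    unfolding diag_part_def f using left_ideal_jmul[OF A] by blast
qed

lemma laurent_ker_in_if_row_polys_subset:
  assumes A: "left_ideal A" and A': "left_ideal A'" and rows: "row_polys A' \<subseteq> row_polys A"
    and z: "z \<in> A'" "z \<in> laurent_ker"
  shows "z \<in> A"
proof -
  obtain k where k: "z = (\<Sum>i<k. diag_part i z)"
    using laurent_ker_eq_sum_diag_part[OF z(2)] by blast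
  have "(\<Sum>i<k. diag_part i z) \<in> A"
    by (rule left_ideal_sum[OF A diag_part_in_if_row_polys_subset[OF A A' rows z(1)]])
  then show ?thesis
    using k by simp
qed

text \<open>For k bounding the y-degrees of b, x^k b is a polynomial f.  If f \<equiv> c modulo J with c \<in> A,
  then y^k x^k b - y^k c lies in A' \<inter> J \<subseteq> A, and b = (\<Sum>i<k. e_ii b) + y^k x^k b.\<close>

lemma subset_if_polys_subset:
  assumes A: "left_ideal A" and A': "left_ideal A'" and sub: "A \<subseteq> A'"
    and rows: "row_polys A' \<subseteq> row_polys A" and residues: "residue_polys A' \<subseteq> residue_polys A"
  shows "A' \<subseteq> A"
proof
  fix b
  assume b: "b \<in> A'"
  obtain k where k: "\<forall>u\<in>keys b. fst u \<le> k"
    using ex_row_bound by blast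
  obtain f where f: "jmul (jmon 0 k) b = jpoly f"
    using ex_jpoly_eq_if_row0[OF keys_jmon_mult_row0[OF k]] by metis
  have "jpoly f \<in> A'"
    unfolding f[symmetric] by (rule left_ideal_jmul[OF A' b])
  then have "f \<in> residue_polys A'"
    unfolding residue_polys_def by (auto intro!: bexI[of _ "jpoly f"] simp: laurent_ker_zero)
  then obtain c where c: "c \<in> A" "jpoly f - c \<in> laurent_ker"
    using residues unfolding residue_polys_def by blast
  define z where "z = jmul (jmon k 0) (jpoly f - c)"
  have z_eq: "z = jmul (jmon k k) b - jmul (jmon k 0) c"
    unfolding z_def f[symmetric] by (simp add: jmul_diff_right jmul_assoc[symmetric] jmon_mult)
  have "z \<in> A'"
    unfolding z_eq using left_ideal_diff[OF A'] left_ideal_jmul[OF A'] b c(1) sub by blast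
  moreover have "z \<in> laurent_ker"
    unfolding z_def by (rule laurent_ker_jmul_left[OF c(2)])
  ultimately have "z \<in> A"
    using laurent_ker_in_if_row_polys_subset[OF A A' rows] by blast
  moreover have "jmul (jmon k k) b = jmul (jmon k 0) c + z"
    using z_eq by simp
  ultimately have "jmul (jmon k k) b \<in> A"
    using left_ideal_add[OF A left_ideal_jmul[OF A c(1)]] by simp
  moreover have "(\<Sum>i<k. diag_part i b) \<in> A"
    by (rule left_ideal_sum[OF A diag_part_in_if_row_polys_subset[OF A A' rows b]])
  ultimately have "(\<Sum>i<k. diag_part i b) + jmul (jmon k k) b \<in> A"
    using left_ideal_add[OF A] by blast
  then show "b \<in> A"
    by (metis sum_diag_part)
qed

lemma card_rem_degrees_polys_less:
  assumes N: "left_ideal N" "left_ideal N'" "N \<subset> N'" and g: "g \<noteq> 0" "jpoly g \<in> N"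
  shows "card (rem_degrees g (row_polys N)) + card (rem_degrees g (residue_polys N))
    < card (rem_degrees g (row_polys N')) + card (rem_degrees g (residue_polys N'))"
proof -
  have "row_polys N \<subseteq> row_polys N'" "residue_polys N \<subseteq> residue_polys N'"
    using N(3) by (simp_all add: row_polys_mono residue_polys_mono psubset_imp_subset)
  moreover have "\<not> (row_polys N' \<subseteq> row_polys N \<and> residue_polys N' \<subseteq> residue_polys N)"
    using subset_if_polys_subset[OF N(1,2)] N(3) by blast
  ultimately consider "row_polys N \<subset> row_polys N'" | "residue_polys N \<subset> residue_polys N'"
    by blast
  then show ?thesis
  proof cases
    case 1
    then have "card (rem_degrees g (row_polys N)) < card (rem_degrees g (row_polys N'))"
      using card_rem_degrees_less[OF poly_subspace_row_polys[OF N(1)] poly_subspace_row_polys[OF N(2)]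
          _ g(1)] multiple_in_row_polys[OF N(1) g(2)] by blast
    moreover have "card (rem_degrees g (residue_polys N)) \<le> card (rem_degrees g (residue_polys N'))"
      using N(3) by (intro card_mono finite_rem_degrees[OF g(1)] rem_degrees_mono residue_polys_mono) auto
    ultimately show ?thesis
      by simp
  next
    case 2
    then have "card (rem_degrees g (residue_polys N)) < card (rem_degrees g (residue_polys N'))"
      using card_rem_degrees_less[OF poly_subspace_residue_polys[OF N(1)]
          poly_subspace_residue_polys[OF N(2)] _ g(1)] multiple_in_residue_polys[OF N(1) g(2)] by blast
    moreover have "card (rem_degrees g (row_polys N)) \<le> card (rem_degrees g (row_polys N'))"
      using N(3) by (intro card_mono finite_rem_degrees[OF g(1)] rem_degrees_mono row_polys_mono) auto
    ultimately show ?thesis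
      by simp
  qed
qed

section \<open>Chains controlled by a strictly monotone measure\<close>

definition composition_series :: "'k::field jac set \<Rightarrow> 'k jac set \<Rightarrow> bool" where
  "composition_series A B \<longleftrightarrow> (\<exists>(n::nat) (M :: nat \<Rightarrow> 'k jac set).
     M 0 = A \<and> M n = B \<and> (\<forall>i\<le>n. left_ideal (M i)) \<and>
     (\<forall>i<n. M i \<subset> M (Suc i) \<and>
        (\<forall>N :: 'k jac set. left_ideal N \<longrightarrow> M i \<subseteq> N \<longrightarrow> N \<subseteq> M (Suc i) \<longrightarrow> N = M i \<or> N = M (Suc i))))"

lemma composition_series_refl: "left_ideal A \<Longrightarrow> composition_series A A"
  unfolding composition_series_def by (rule exI[of _ 0], rule exI[of _ "\<lambda>_. A"]) auto

lemma composition_series_cons: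
  assumes A: "left_ideal A" and AN: "A \<subset> N"
    and cover: "\<forall>N'. left_ideal N' \<longrightarrow> A \<subseteq> N' \<longrightarrow> N' \<subseteq> N \<longrightarrow> N' = A \<or> N' = N"
    and series: "composition_series N B"
  shows "composition_series A B"
proof -
  obtain n M where M: "M 0 = N" "M n = B" "\<forall>i\<le>n. left_ideal (M i)"
    "\<forall>i<n. M i \<subset> M (Suc i) \<and>
       (\<forall>N'. left_ideal N' \<longrightarrow> M i \<subseteq> N' \<longrightarrow> N' \<subseteq> M (Suc i) \<longrightarrow> N' = M i \<or> N' = M (Suc i))"
    using series unfolding composition_series_def by blast
  define M' where "M' i = (if i = 0 then A else M (i - 1))" for i
  have "\<forall>i<Suc n. M' i \<subset> M' (Suc i) \<and>
      (\<forall>N'. left_ideal N' \<longrightarrow> M' i \<subseteq> N' \<longrightarrow> N' \<subseteq> M' (Suc i) \<longrightarrow> N' = M' i \<or> N' = M' (Suc i))"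
  proof (intro allI impI)
    fix i
    assume i: "i < Suc n"
    show "M' i \<subset> M' (Suc i) \<and>
        (\<forall>N'. left_ideal N' \<longrightarrow> M' i \<subseteq> N' \<longrightarrow> N' \<subseteq> M' (Suc i) \<longrightarrow> N' = M' i \<or> N' = M' (Suc i))"
    proof (cases i)
      case 0
      then show ?thesis
        using AN cover M(1) by (simp add: M'_def)
    next
      case (Suc j)
      then show ?thesis
        using M(4) i by (simp add: M'_def)
    qed
  qed
  moreover have "M' 0 = A" "M' (Suc n) = B" "\<forall>i\<le>Suc n. left_ideal (M' i)"
    using M A by (auto simp: M'_def)
  ultimately show ?thesis
    unfolding composition_series_def by blast
qed

text \<open>A \<mu>-minimal left ideal strictly between A and T is a cover of A.\<close>

lemma obtain_cover_if_strict_measure: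
  fixes \<mu> :: "'k::field jac set \<Rightarrow> nat"
  assumes strict: "\<And>N N'. left_ideal N \<Longrightarrow> left_ideal N' \<Longrightarrow> N \<subset> N' \<Longrightarrow> N' \<subseteq> T \<Longrightarrow> \<mu> N < \<mu> N'"
    and T: "left_ideal T" "A \<subset> T"
  obtains N where "left_ideal N" "A \<subset> N" "N \<subseteq> T"
    "\<forall>N'. left_ideal N' \<longrightarrow> A \<subseteq> N' \<longrightarrow> N' \<subseteq> N \<longrightarrow> N' = A \<or> N' = N"
proof -
  define C where "C N \<longleftrightarrow> left_ideal N \<and> A \<subset> N \<and> N \<subseteq> T" for N
  have "C T"
    unfolding C_def using T by blast
  then obtain N where N: "C N" and N_min: "\<And>N'. C N' \<Longrightarrow> \<mu> N \<le> \<mu> N'"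
    using ex_has_least_nat[of C T \<mu>] by blast
  have "N' = A \<or> N' = N" if N': "left_ideal N'" "A \<subseteq> N'" "N' \<subseteq> N" for N'
  proof (rule ccontr)
    assume "\<not> (N' = A \<or> N' = N)"
    then have "C N'" "\<mu> N' < \<mu> N"
      using N' N strict[of N' N] unfolding C_def by auto
    then show False
      using N_min[of N'] by simp
  qed
  then show ?thesis
    using N that unfolding C_def by blast
qed

lemma composition_series_if_strict_measure:
  fixes \<mu> :: "'k::field jac set \<Rightarrow> nat"
  assumes T: "left_ideal T"
    and strict: "\<And>N N'. left_ideal N \<Longrightarrow> left_ideal N' \<Longrightarrow> N \<subset> N' \<Longrightarrow> N' \<subseteq> T \<Longrightarrow> \<mu> N < \<mu> N'"
  shows "left_ideal A \<Longrightarrow> A \<subseteq> T \<Longrightarrow> composition_series A T"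
proof (induction "\<mu> T - \<mu> A" arbitrary: A rule: less_induct)
  case (less A)
  show ?case
  proof (cases "A = T")
    case True
    then show ?thesis
      using composition_series_refl T by simp
  next
    case False
    then have "A \<subset> T"
      using less.prems(2) by blast
    then obtain N where N: "left_ideal N" "A \<subset> N" "N \<subseteq> T"
      and cover: "\<forall>N'. left_ideal N' \<longrightarrow> A \<subseteq> N' \<longrightarrow> N' \<subseteq> N \<longrightarrow> N' = A \<or> N' = N"
      using obtain_cover_if_strict_measure[where \<mu> = \<mu>] strict T by blast
    have "\<mu> A < \<mu> N"
      using N strict[of A N] less.prems by blast
    moreover have "\<mu> N \<le> \<mu> T"
    proof (cases "N = T")
      case False
      then have "N \<subset> T"
        using N by blast
      then show ?thesis
        using N strict[of N T] T by fastforce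
    qed simp
    ultimately have "\<mu> T - \<mu> N < \<mu> T - \<mu> A"
      by linarith
    then have "composition_series N T"
      using less.hyps[of N] N by blast
    then show ?thesis
      using composition_series_cons[OF less.prems(1) N(2) cover] by blast
  qed
qed

lemma finite_length_if_strict_measure:
  fixes \<mu> :: "'k::field jac set \<Rightarrow> nat"
  assumes T: "left_ideal T"
    and strict: "\<And>N N'. left_ideal N \<Longrightarrow> left_ideal N' \<Longrightarrow> N \<subset> N' \<Longrightarrow> N' \<subseteq> T \<Longrightarrow> \<mu> N < \<mu> N'"
  shows "finite_length T"
proof -
  have "left_ideal {0::'k jac}"
    unfolding left_ideal_def by simp
  then have "composition_series {0} T"
    using composition_series_if_strict_measure[where \<mu> = \<mu>, OF T strict] left_ideal_zero[OF T]
    by blast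
  then show ?thesis
    unfolding finite_length_def composition_series_def .
qed

lemma fin_gen_if_strict_bounded_measure:
  fixes \<mu> :: "'k::field jac set \<Rightarrow> nat"
  assumes T: "left_ideal T" "finite G0" "G0 \<subseteq> T"
    and bound: "\<And>N. left_ideal N \<Longrightarrow> G0 \<subseteq> N \<Longrightarrow> N \<subseteq> T \<Longrightarrow> \<mu> N \<le> B"
    and strict: "\<And>N N'. left_ideal N \<Longrightarrow> left_ideal N' \<Longrightarrow> G0 \<subseteq> N \<Longrightarrow> N \<subset> N' \<Longrightarrow> N' \<subseteq> T \<Longrightarrow> \<mu> N < \<mu> N'"
  shows "fin_gen T"
proof -
  have "finite G \<Longrightarrow> G0 \<subseteq> G \<Longrightarrow> G \<subseteq> T \<Longrightarrow> fin_gen T" for G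
  proof (induction "B - \<mu> (lspan G)" arbitrary: G rule: less_induct)
    case (less G)
    show ?case
    proof (cases "T \<subseteq> lspan G")
      case True
      then show ?thesis
        using fin_genI[OF T(1)] less.prems by blast
    next
      case False
      then obtain b where b: "b \<in> T" "b \<notin> lspan G"
        by blast
      have "lspan G \<subset> lspan (insert b G)"
        using lspan_mono[of G "insert b G"] lspan_superset[of "insert b G"] b(2) by blast
      moreover have "lspan (insert b G) \<subseteq> T"
        using lspan_least[OF T(1)] less.prems b(1) by blast
      moreover have "G0 \<subseteq> lspan G"
        using less.prems lspan_superset by blast
      ultimately have "\<mu> (lspan G) < \<mu> (lspan (insert b G))" "\<mu> (lspan (insert b G)) \<le> B"
        using strict[OF left_ideal_lspan left_ideal_lspan] bound[OF left_ideal_lspan] by blast+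
      then have "B - \<mu> (lspan (insert b G)) < B - \<mu> (lspan G)"
        by linarith
      then show ?thesis
        using less.hyps[of "insert b G"] less.prems b(1) by blast
    qed
  qed
  then show ?thesis
    using T by blast
qed

lemma fin_gen_finite_length_of_socle_sum:
  fixes S H :: "'k::field jac set" and p :: "'k poly"
  assumes H: "left_ideal H" and S: "left_ideal S" and SI: "S \<subseteq> jI"
    and H_eq: "H = {s + t | s t. s \<in> S \<and> t \<in> lprinc (jpoly p)}"
    and disjoint: "S \<inter> lprinc (jpoly p) = {0}" and p: "p \<noteq> 0"
  shows "fin_gen H \<and> finite_length S"
proof -
  define \<mu> where "\<mu> N = card (rem_degrees p (row_polys N))" for N :: "'k jac set"
  have strict: "\<mu> N < \<mu> N'" if N: "left_ideal N" "left_ideal N'" "N \<subset> N'" "N' \<subseteq> S" for N N'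
  proof -
    have "row_polys N \<subset> row_polys N'"
      using row_polys_mono[of N N'] laurent_ker_in_if_row_polys_subset[OF N(1,2)]
        N(3,4) SI jI_subset_laurent_ker by blast
    moreover have "h \<in> row_polys N" if h: "h \<in> row_polys N'" "p dvd h" for h
    proof -
      obtain q where "h = p * q"
        using h(2) by (elim dvdE)
      then have "jrow h \<in> lprinc (jpoly p)"
        unfolding lprinc_def using jrow_mult[of q p] by (auto simp: mult.commute)
      moreover have "jrow h \<in> S"
        using h(1) N(4) unfolding row_polys_def by blast
      ultimately have "jrow h = 0"
        using disjoint by blast
      then show ?thesis
        using left_ideal_zero[OF N(1)] unfolding row_polys_def by simp
    qed
    ultimately show ?thesis
      unfolding \<mu>_def using card_rem_degrees_less poly_subspace_row_polys N p by blast
  qed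
  have bound: "\<mu> N \<le> degree p" for N
    unfolding \<mu>_def by (rule card_rem_degrees_le[OF p])
  have "fin_gen S"
    by (rule fin_gen_if_strict_bounded_measure[OF S, of "{}" \<mu> "degree p"])
      (auto intro: strict bound)
  then show ?thesis
    using fin_gen_sum_lprinc[OF _ H H_eq] finite_length_if_strict_measure[where \<mu> = \<mu>, OF S strict] by blast
qed

lemma semisimple_or_fin_gen:
  assumes L: "left_ideal (L::'k::field jac set)"
  shows "semisimple_li L \<or> fin_gen L"
proof (cases "L \<subseteq> laurent_ker")
  case True
  then show ?thesis
    using semisimple_if_subset_laurent_ker[OF L] by blast
next
  case False
  then obtain a where a: "a \<in> L" "a \<notin> laurent_ker"
    by blast
  obtain k g where g: "jmul (jmon 0 k) a = jpoly g" "g \<noteq> 0"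
    using obtain_jpoly_mult_notin_laurent_ker[OF a(2)] by blast
  define \<mu> where "\<mu> A = card (rem_degrees g (row_polys A)) + card (rem_degrees g (residue_polys A))"
    for A :: "'k jac set"
  have strict: "\<mu> N < \<mu> N'" if N: "left_ideal N" "left_ideal N'" "{a} \<subseteq> N" "N \<subset> N'" for N N'
  proof -
    have "jpoly g \<in> N"
      unfolding g(1)[symmetric] using N(1,3) by (simp add: left_ideal_jmul)
    then show ?thesis
      unfolding \<mu>_def by (rule card_rem_degrees_polys_less[OF N(1,2,4) g(2)])
  qed
  have bound: "\<mu> N \<le> 2 * degree g" for N
    unfolding \<mu>_def using card_rem_degrees_le[OF g(2), of "row_polys N"]
      card_rem_degrees_le[OF g(2), of "residue_polys N"] by simp
  have "fin_gen L"
    by (rule fin_gen_if_strict_bounded_measure[OF L, of "{a}" \<mu> "2 * degree g"])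
      (auto intro: strict bound simp: a)
  then show ?thesis
    by blast
qed

theorem corollary1:
  shows "(\<forall>(S :: 'k::field jac set) H (p :: 'k poly).
            left_ideal H \<and> left_ideal S \<and> S \<subseteq> jI \<and>
            H = {s + t | s t. s \<in> S \<and> t \<in> lprinc (jpoly p)} \<and>
            S \<inter> lprinc (jpoly p) = {0} \<and> p \<noteq> 0
            \<longrightarrow> fin_gen H \<and> finite_length S)
       \<and> (\<forall>L :: 'k jac set. left_ideal L \<longrightarrow> semisimple_li L \<or> fin_gen L)"
  using fin_gen_finite_length_of_socle_sum semisimple_or_fin_gen by blast

end
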